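(* $\widetilde{S}_{AB}$ is a down-complete Inf semi-lattice, and for every family $\{U_i\;\vert\; i\in I\}$ of subsets of $\mathfrak{S}_A\times\mathfrak{S}_B$, $$\inf^{\widetilde{S}_{AB}}_{i\in I}\Omega(U_i)=\Omega\Big(\bigcup_{i\in I}U_i\Big).$$
   Context: $\mathfrak{B}=\{\mathbf{Y},\mathbf{N},\bot\}$ with meet $\wedge$ and commutative product $\bullet$ ($x\bullet\mathbf{Y}=x$, $x\bullet\mathbf{N}=\mathbf{N}$, $\bot\bullet\bot=\bot$). $(\mathfrak{S}_A,\mathfrak{E}_A,\epsilon^{\mathfrak{S}_A})$, $(\mathfrak{S}_B,\mathfrak{E}_B,\epsilon^{\mathfrak{S}_B})$ are States/Effects Chu spaces (down-complete Inf semi-lattices of states and of effects, evaluation maps $\epsilon$ preserving arbitrary infima in each variable). For $U\subseteq\mathfrak{S}_A\times\mathfrak{S}_B$, $\Omega(U)$ is the map $\mathfrak{E}_A\times\mathfrak{E}_B\to\mathfrak{B}$, $(\mathfrak{l}_A,\mathfrak{l}_B)\mapsto\bigwedge_{(\sigma_A,\sigma_B)\in U}\epsilon^{\mathfrak{S}_A}_{\mathfrak{l}_A}(\sigma_A)\bullet\epsilon^{\mathfrak{S}_B}_{\mathfrak{l}_B}(\sigma_B)$ (subsets giving the same map are identified). The minimal tensor product $\widetilde{S}_{AB}$ is the set of all such maps $\Omega(U)$, ordered pointwise (it is the sub Inf semi-lattice of the maximal tensor product generated by the pure tensors). *)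

theory Defs
  imports Main
begin

datatype B3 = Y | N | Bot

instantiation B3 :: order
begin
definition less_eq_B3 :: "B3 \<Rightarrow> B3 \<Rightarrow> bool" where
  "less_eq_B3 x y \<longleftrightarrow> x = y \<or> x = Bot"
definition less_B3 :: "B3 \<Rightarrow> B3 \<Rightarrow> bool" where
  "less_B3 x y \<longleftrightarrow> x \<le> y \<and> x \<noteq> y"
instance by standard (auto simp: less_eq_B3_def less_B3_def)
end

definition Bmeet :: "B3 set \<Rightarrow> B3" where
  "Bmeet A = (if A \<noteq> {} \<and> A \<subseteq> {Y} then Y
              else if A \<noteq> {} \<and> A \<subseteq> {N} then N else Bot)"

fun Bprod :: "B3 \<Rightarrow> B3 \<Rightarrow> B3" where
  "Bprod x Y = x"
| "Bprod Y x = x"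
| "Bprod x N = N"
| "Bprod N x = N"
| "Bprod Bot Bot = Bot"

definition is_glb :: "'a::order set \<Rightarrow> 'a set \<Rightarrow> 'a \<Rightarrow> bool" where
  "is_glb C A x \<longleftrightarrow> x \<in> C \<and> (\<forall>a\<in>A. x \<le> a) \<and> (\<forall>y\<in>C. (\<forall>a\<in>A. y \<le> a) \<longrightarrow> y \<le> x)"

definition down_complete :: "'a::order set \<Rightarrow> bool" where
  "down_complete C \<longleftrightarrow> (\<forall>A. A \<subseteq> C \<and> A \<noteq> {} \<longrightarrow> (\<exists>x. is_glb C A x))"

text \<open>States/Effects Chu space: states and effects (the whole types) are down-complete
  Inf semi-lattices, and the evaluation map preserves (nonempty) infima in each variable.\<close>
definition chu_space :: "('e::order \<Rightarrow> 's::order \<Rightarrow> B3) \<Rightarrow> bool" where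
  "chu_space eps \<longleftrightarrow> down_complete (UNIV :: 's set) \<and> down_complete (UNIV :: 'e set)
     \<and> (\<forall>l A s. A \<noteq> {} \<and> is_glb UNIV A s \<longrightarrow> eps l s = Bmeet (eps l ` A))
     \<and> (\<forall>s A l. A \<noteq> {} \<and> is_glb UNIV A l \<longrightarrow> eps l s = Bmeet ((\<lambda>l'. eps l' s) ` A))"

definition Omega :: "('ea \<Rightarrow> 'sa \<Rightarrow> B3) \<Rightarrow> ('eb \<Rightarrow> 'sb \<Rightarrow> B3) \<Rightarrow> ('sa \<times> 'sb) set
                      \<Rightarrow> ('ea \<times> 'eb \<Rightarrow> B3)" where
  "Omega epsA epsB U = (\<lambda>(lA, lB). Bmeet ((\<lambda>(sA, sB). Bprod (epsA lA sA) (epsB lB sB)) ` U))"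

text \<open>Minimal tensor product: all Omega(U), U nonempty; ordered pointwise (order on functions).\<close>
definition Smin :: "('ea \<Rightarrow> 'sa \<Rightarrow> B3) \<Rightarrow> ('eb \<Rightarrow> 'sb \<Rightarrow> B3) \<Rightarrow> ('ea \<times> 'eb \<Rightarrow> B3) set" where
  "Smin epsA epsB = {Omega epsA epsB U | U. U \<noteq> {}}"

end

theory Submission
  imports Defs
begin

text \<open>The infimum of a family of \<open>\<Omega>(U\<^sub>i)\<close> is \<open>\<Omega>\<close> of the union because \<open>\<Omega>(U)\<close> is, pointwise, the
  meet of a set of values indexed by \<open>U\<close>, and a meet over a union is the meet of the meets.
  Since every element of \<open>\<widetilde>S\<^sub>A\<^sub>B\<close> has the form \<open>\<Omega>(U)\<close>, this already yields all nonempty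
  infima.\<close>

lemma Bmeet_lower: "a \<in> A \<Longrightarrow> Bmeet A \<le> a"
  by (cases a) (auto simp: Bmeet_def less_eq_B3_def)

lemma Bmeet_greatest: "A \<noteq> {} \<Longrightarrow> (\<And>a. a \<in> A \<Longrightarrow> y \<le> a) \<Longrightarrow> y \<le> Bmeet A"
  by (cases y) (auto simp: Bmeet_def less_eq_B3_def subset_iff)

lemma Bmeet_antimono: "A \<noteq> {} \<Longrightarrow> A \<subseteq> B \<Longrightarrow> Bmeet B \<le> Bmeet A"
  by (auto intro: Bmeet_greatest Bmeet_lower)

lemma Omega_antimono:
  assumes "U \<noteq> {}" and "U \<subseteq> V"
  shows "Omega epsA epsB V \<le> Omega epsA epsB U"
  unfolding le_fun_def Omega_def
  using assms by (auto intro: Bmeet_antimono)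

lemma Omega_UN_greatest:
  fixes epsA :: "'ea \<Rightarrow> 'sa \<Rightarrow> B3" and epsB :: "'eb \<Rightarrow> 'sb \<Rightarrow> B3"
  assumes "I \<noteq> {}" and "\<forall>i\<in>I. U i \<noteq> {}"
    and lower: "\<forall>i\<in>I. f \<le> Omega epsA epsB (U i)"
  shows "f \<le> Omega epsA epsB (\<Union>i\<in>I. U i)"
  unfolding le_fun_def
proof
  fix l :: "'ea \<times> 'eb"
  obtain lA lB where l: "l = (lA, lB)" by fastforce
  let ?val = "\<lambda>(sA, sB). Bprod (epsA lA sA) (epsB lB sB)"
  have "f l \<le> ?val s" if "i \<in> I" and "s \<in> U i" for i s
  proof -
    have "f l \<le> Omega epsA epsB (U i) l"
      using lower \<open>i \<in> I\<close> by (blast dest: le_funD)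
    also have "\<dots> \<le> ?val s"
      unfolding l Omega_def using \<open>s \<in> U i\<close> by (simp add: Bmeet_lower)
    finally show ?thesis .
  qed
  then show "f l \<le> Omega epsA epsB (\<Union>i\<in>I. U i) l"
    unfolding l Omega_def using assms(1,2) by (auto intro!: Bmeet_greatest)
qed

lemma is_glb_Omega_UN:
  assumes "I \<noteq> {}" and "\<forall>i\<in>I. U i \<noteq> {}"
  shows "is_glb (Smin epsA epsB) ((\<lambda>i. Omega epsA epsB (U i)) ` I)
           (Omega epsA epsB (\<Union>i\<in>I. U i))"
  unfolding is_glb_def
proof (intro conjI ballI impI)
  show "Omega epsA epsB (\<Union>i\<in>I. U i) \<in> Smin epsA epsB"
    using assms unfolding Smin_def by blast
  show "Omega epsA epsB (\<Union>i\<in>I. U i) \<le> f" if "f \<in> (\<lambda>i. Omega epsA epsB (U i)) ` I" for f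
    using that assms(2) by (auto intro: Omega_antimono)
  show "f \<le> Omega epsA epsB (\<Union>i\<in>I. U i)"
    if "\<forall>g\<in>(\<lambda>i. Omega epsA epsB (U i)) ` I. f \<le> g" for f
    using that assms by (auto intro: Omega_UN_greatest)
qed

lemma down_complete_Smin: "down_complete (Smin epsA epsB)"
  unfolding down_complete_def
proof (intro allI impI)
  fix A assume A: "A \<subseteq> Smin epsA epsB \<and> A \<noteq> {}"
  then have "\<forall>f\<in>A. \<exists>U. U \<noteq> {} \<and> f = Omega epsA epsB U"
    unfolding Smin_def by blast
  then obtain V where V: "\<forall>f\<in>A. V f \<noteq> {} \<and> Omega epsA epsB (V f) = f"
    by metis
  then have "(\<lambda>f. Omega epsA epsB (V f)) ` A = A"
    by simp
  moreover have "is_glb (Smin epsA epsB) ((\<lambda>f. Omega epsA epsB (V f)) ` A)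
                   (Omega epsA epsB (\<Union>f\<in>A. V f))"
    using A V by (intro is_glb_Omega_UN) auto
  ultimately show "\<exists>x. is_glb (Smin epsA epsB) A x"
    by auto
qed

theorem mainTheorem4:
  fixes epsA :: "'ea::order \<Rightarrow> 'sa::order \<Rightarrow> B3"
    and epsB :: "'eb::order \<Rightarrow> 'sb::order \<Rightarrow> B3"
  assumes "chu_space epsA" and "chu_space epsB"
  shows "down_complete (Smin epsA epsB) \<and>
    (\<forall>(U :: 'i \<Rightarrow> ('sa \<times> 'sb) set) I. I \<noteq> {} \<and> (\<forall>i\<in>I. U i \<noteq> {}) \<longrightarrow>
       is_glb (Smin epsA epsB) ((\<lambda>i. Omega epsA epsB (U i)) ` I)
              (Omega epsA epsB (\<Union>i\<in>I. U i)))"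
  by (simp add: down_complete_Smin is_glb_Omega_UN)

end
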